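(* For every Motzkin tree $T$, $\mathrm{ucs1}(T)$ holds if and only if $\mathrm{is\_ucs}(T)$ holds.
   Context: Motzkin trees are the terms generated by a leaf $v$, a unary constructor $l$ and a binary constructor $a$. $\mathrm{ucs1}(T)$ holds iff, for every leaf of $T$, the number of unary nodes on the path from the root of $T$ to that leaf (counted starting from $0$) equals $1$. For a Boolean $b$, the predicate $\mathrm{is\_ucs\_aux}(T,b)$ is defined recursively with a Boolean flag recording whether a unary node has already been met: - $\mathrm{is\_ucs\_aux}(v,b)$ iff $b$ is true; - $\mathrm{is\_ucs\_aux}(l(T),b)$ iff $b$ is false and $\mathrm{is\_ucs\_aux}(T,\mathrm{true})$; - $\mathrm{is\_ucs\_aux}(a(T_1,T_2),b)$ iff $\mathrm{is\_ucs\_aux}(T_1,b)$ and $\mathrm{is\_ucs\_aux}(T_2,b)$. Finally, $\mathrm{is\_ucs}(T) := \mathrm{is\_ucs\_aux}(T,\mathrm{false})$. *)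

theory Defs
  imports Main
begin

datatype mt = v | l mt | a mt mt

fun leaf_unary_counts :: "mt \<Rightarrow> nat list" where
  "leaf_unary_counts v = [0]"
| "leaf_unary_counts (l t) = map Suc (leaf_unary_counts t)"
| "leaf_unary_counts (a t1 t2) = leaf_unary_counts t1 @ leaf_unary_counts t2"

definition ucs1 :: "mt \<Rightarrow> bool" where
  "ucs1 T \<longleftrightarrow> (\<forall>k \<in> set (leaf_unary_counts T). k = 1)"

fun is_ucs_aux :: "mt \<Rightarrow> bool \<Rightarrow> bool" where
  "is_ucs_aux v b \<longleftrightarrow> b"
| "is_ucs_aux (l t) b \<longleftrightarrow> \<not> b \<and> is_ucs_aux t True"
| "is_ucs_aux (a t1 t2) b \<longleftrightarrow> is_ucs_aux t1 b \<and> is_ucs_aux t2 b"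

definition is_ucs :: "mt \<Rightarrow> bool" where
  "is_ucs T \<longleftrightarrow> is_ucs_aux T False"

end

theory Submission
  imports Defs
begin

lemma leaf_unary_counts_not_Nil: "leaf_unary_counts T \<noteq> []"
  by (induction T) auto

text \<open>The flag counts the unary node already met above the subtree, so every leaf must
see exactly one unary node in total; nonemptiness of the count list rules out a second one.\<close>

lemma is_ucs_aux_iff:
  "is_ucs_aux T b \<longleftrightarrow> (\<forall>k \<in> set (leaf_unary_counts T). k + of_bool b = 1)"
proof (induction T arbitrary: b)
  case (l T)
  have "set (leaf_unary_counts T) \<noteq> {}"
    using leaf_unary_counts_not_Nil by simp
  with l.IH show ?case
    by (cases b) auto
qed auto

theorem mainTheorem6:
  fixes T :: mt
  shows "ucs1 T \<longleftrightarrow> is_ucs T"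
  by (simp add: ucs1_def is_ucs_def is_ucs_aux_iff)

end
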